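(* With $s=\sqrt{(u_3+u_4)^2-4u_1u_2}$, $$\sum_{n\ge0}\Bigl(\sum_{\sigma\in\mathfrak S_n}(u_1u_2)^{{\rm L}(\sigma)}u_3^{{\rm lrda}(\sigma)}u_4^{{\rm dd}(\sigma)}\beta^{{\rm RLmin}(\sigma)}\Bigr)\frac{t^n}{n!}=e^{\frac{\beta}{2}(u_3-u_4)t}\left(\cosh\Bigl(\frac{st}{2}\Bigr)-\frac{u_3+u_4}{s}\sinh\Bigl(\frac{st}{2}\Bigr)\right)^{-\beta}.$$
   Context: For $\sigma=\sigma_1\cdots\sigma_n\in\mathfrak S_n$ ($\mathfrak S_0$ = empty permutation, contributing $1$): ${\rm L}(\sigma)$ is the number of $i$ with $1\le i<n$ and $\sigma_{i-1}<\sigma_i>\sigma_{i+1}$ (convention $\sigma_0=0$); ${\rm lrda}(\sigma)$ (left-right double ascents) is the number of $i$ with $1\le i\le n$ and $\sigma_{i-1}<\sigma_i<\sigma_{i+1}$ (conventions $\sigma_0=0$, $\sigma_{n+1}=+\infty$); ${\rm dd}(\sigma)$ is the number of $i$ with $1<i<n$ and $\sigma_{i-1}>\sigma_i>\sigma_{i+1}$; ${\rm RLmin}(\sigma)$ is the number of $i$ with $\sigma_j>\sigma_i$ for all $j>i$. Series are formal power series in $t$; the bracketed series depends only on $s^2$, has constant term $1$, and $G^c:=\exp(c\log G)$. *)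

theory Defs
  imports "HOL-Combinatorics.Multiset_Permutations" "HOL-Computational_Algebra.Formal_Power_Series" Complex_Main
begin

(* A permutation sigma = sigma_1 ... sigma_n of {1..n} is a list xs; sigma_i = xs ! (i-1).
   pval xs i gives sigma_i for 1 <= i <= n and the convention sigma_0 = 0. *)
definition pval :: "nat list \<Rightarrow> nat \<Rightarrow> nat" where
  "pval xs i = (if i = 0 then 0 else xs ! (i - 1))"

definition statL :: "nat list \<Rightarrow> nat" where
  "statL xs = card {i. 1 \<le> i \<and> i < length xs \<and>
      pval xs (i - 1) < pval xs i \<and> pval xs i > pval xs (i + 1)}"

(* lrda(sigma): 1 <= i <= n with sigma_{i-1} < sigma_i < sigma_{i+1}, sigma_0 = 0, sigma_{n+1} = +infinity *)
definition lrda :: "nat list \<Rightarrow> nat" where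
  "lrda xs = card {i. 1 \<le> i \<and> i \<le> length xs \<and>
      pval xs (i - 1) < pval xs i \<and> (i = length xs \<or> pval xs i < pval xs (i + 1))}"

definition dd :: "nat list \<Rightarrow> nat" where
  "dd xs = card {i. 1 < i \<and> i < length xs \<and>
      pval xs (i - 1) > pval xs i \<and> pval xs i > pval xs (i + 1)}"

definition RLmin :: "nat list \<Rightarrow> nat" where
  "RLmin xs = card {i. 1 \<le> i \<and> i \<le> length xs \<and>
      (\<forall>j. i < j \<and> j \<le> length xs \<longrightarrow> pval xs j > pval xs i)}"

definition fps_cosh_ser :: "'a::field_char_0 \<Rightarrow> 'a fps" where
  "fps_cosh_ser a = Abs_fps (\<lambda>n. if even n then a ^ n / of_nat (fact n) else 0)"

(* formal power series in t: sinh(s t / 2) / s, i.e. sum_k s^(2k) t^(2k+1) / (2^(2k+1) (2k+1)!) *)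
definition fps_sinh_half_div :: "'a::field_char_0 \<Rightarrow> 'a fps" where
  "fps_sinh_half_div s = Abs_fps (\<lambda>n. if odd n then s ^ (n - 1) / (2 ^ n * of_nat (fact n)) else 0)"

definition fps_log :: "'a::field_char_0 fps \<Rightarrow> 'a fps" where
  "fps_log G = fps_ln 1 oo (G - 1)"

definition fps_gpow :: "'a::field_char_0 fps \<Rightarrow> 'a \<Rightarrow> 'a fps" where
  "fps_gpow G c = fps_exp c oo fps_log G"

end

theory Submission
  imports Defs
begin

(* Decomposing a permutation at its minimum letter, with the borders 0 and n + 1 attached, expresses
   the series F on the left as the solution of  F' = \<beta> (D + u3) F,  where the egf D of words
   framed by two smaller letters satisfies the Riccati equation  D' = u1 u2 + (u3 + u4) D + D^2.
   The Riccati equation is linearised by G' = -(D + (u3 + u4)/2) G with G'' = (s/2)^2 G, whose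
   solution with G(0) = 1 and G'(0) = -(u3 + u4)/2 is  G = cosh(s t/2) - (u3 + u4) sinh(s t/2)/s.
   Hence log F has derivative \<beta> (u3 - u4)/2 - \<beta> (log G)', which integrates to the closed form. *)

lemma power_card_filter_eq_prod:
  fixes c :: "'a::comm_monoid_mult"
  assumes "finite A"
  shows "c ^ card {i\<in>A. P i} = (\<Prod>i\<in>A. if P i then c else 1)"
  using assms by (simp add: prod.If_cases Int_def conj_commute)

lemma sum_Pow_card:
  fixes g :: "nat \<Rightarrow> 'a::comm_semiring_1"
  assumes "finite R"
  shows "(\<Sum>T\<in>Pow R. g (card T)) = (\<Sum>j\<le>card R. of_nat (card R choose j) * g j)"
proof -
  have "(\<Sum>T\<in>Pow R. g (card T)) = (\<Sum>j\<le>card R. \<Sum>T\<in>{T\<in>Pow R. card T = j}. g (card T))"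
    by (rule sum.group[symmetric]) (use assms card_mono in \<open>auto simp: finite_Pow_iff\<close>)
  also have "\<dots> = (\<Sum>j\<le>card R. of_nat (card R choose j) * g j)"
    using n_subsets[OF assms] by (intro sum.cong refl) (simp add: Pow_def)
  finally show ?thesis .
qed

lemma sum_permutations_of_set_split:
  assumes "finite S" "m \<in> S"
  shows "(\<Sum>\<sigma>\<in>permutations_of_set S. w \<sigma>) =
    (\<Sum>T\<in>Pow (S - {m}). \<Sum>a\<in>permutations_of_set T. \<Sum>g\<in>permutations_of_set (S - {m} - T). w (a @ m # g))"
proof -
  define R where "R = S - {m}"
  define Sig where "Sig = (SIGMA T:Pow R. permutations_of_set T \<times> permutations_of_set (R - T))"
  define h where "h = (\<lambda>(T::'a set, a::'a list, g::'a list). a @ m # g)"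
  have finR: "finite R" using assms by (simp add: R_def)
  have inj: "inj_on h Sig"
  proof (rule inj_onI)
    fix x y assume x: "x \<in> Sig" and y: "y \<in> Sig" and e: "h x = h y"
    obtain T a g where xx: "x = (T, a, g)" by (cases x) auto
    obtain T' a' g' where yy: "y = (T', a', g')" by (cases y) auto
    have "m \<notin> set a" "m \<notin> set a'" "m \<notin> set g"
      using x y unfolding xx yy Sig_def R_def permutations_of_set_def by auto
    then have "a = a' \<and> g = g'" using e append_Cons_eq_iff[of m a g a' g'] unfolding xx yy h_def by simp
    moreover have "T = set a" "T' = set a'"
      using x y unfolding xx yy Sig_def permutations_of_set_def by auto
    ultimately show "x = y" unfolding xx yy by simp
  qed
  have img: "h ` Sig = permutations_of_set S"
  proof
    show "h ` Sig \<subseteq> permutations_of_set S"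
      using assms unfolding Sig_def h_def R_def permutations_of_set_def by auto
  next
    show "permutations_of_set S \<subseteq> h ` Sig"
    proof
      fix \<sigma> assume \<sigma>: "\<sigma> \<in> permutations_of_set S"
      then obtain a g where \<sigma>_eq: "\<sigma> = a @ m # g"
        using assms by (metis permutations_of_setD(1) split_list)
      then have "(set a, a, g) \<in> Sig"
        using \<sigma> unfolding Sig_def R_def permutations_of_set_def by auto
      then show "\<sigma> \<in> h ` Sig" by (force simp: h_def \<sigma>_eq)
    qed
  qed
  have "(\<Sum>\<sigma>\<in>permutations_of_set S. w \<sigma>) = (\<Sum>x\<in>Sig. w (h x))"
    using sum.reindex[OF inj, of w] img by simp
  also have "\<dots> = (\<Sum>T\<in>Pow R. \<Sum>ag\<in>permutations_of_set T \<times> permutations_of_set (R - T). w (h (T, ag)))"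
    unfolding Sig_def using finR by (subst sum.Sigma) (auto intro: finite_subset simp: split_def)
  also have "\<dots> = (\<Sum>T\<in>Pow R. \<Sum>a\<in>permutations_of_set T. \<Sum>g\<in>permutations_of_set (R - T). w (a @ m # g))"
    by (simp add: h_def sum.cartesian_product split_def)
  finally show ?thesis by (simp add: R_def)
qed

lemma sum_permutations_of_set_Min_convolution:
  fixes f f1 f2 :: "'a::linorder list \<Rightarrow> 'b::comm_semiring_1"
  assumes S: "finite S" "S \<noteq> {}"
    and split: "\<And>T a g. T \<subseteq> S - {Min S} \<Longrightarrow> a \<in> permutations_of_set T \<Longrightarrow>
           g \<in> permutations_of_set (S - {Min S} - T) \<Longrightarrow>
           f (a @ Min S # g) = c (length a) (length g) * (f1 a * f2 g)"
    and sum1: "\<And>T. T \<subseteq> S - {Min S} \<Longrightarrow> (\<Sum>a\<in>permutations_of_set T. f1 a) = A (card T)"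
    and sum2: "\<And>T. T \<subseteq> S - {Min S} \<Longrightarrow> (\<Sum>g\<in>permutations_of_set T. f2 g) = B (card T)"
  shows "(\<Sum>\<sigma>\<in>permutations_of_set S. f \<sigma>) =
    (\<Sum>j\<le>card S - 1. of_nat (card S - 1 choose j) * (c j (card S - 1 - j) * (A j * B (card S - 1 - j))))"
proof -
  define R where "R = S - {Min S}"
  have finR: "finite R" and cardR: "card R = card S - 1"
    using S by (simp_all add: R_def)
  have "(\<Sum>\<sigma>\<in>permutations_of_set S. f \<sigma>) =
      (\<Sum>T\<in>Pow R. \<Sum>a\<in>permutations_of_set T. \<Sum>g\<in>permutations_of_set (R - T). f (a @ Min S # g))"
    unfolding R_def using S by (intro sum_permutations_of_set_split) auto
  also have "\<dots> = (\<Sum>T\<in>Pow R. c (card T) (card R - card T) *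
      ((\<Sum>a\<in>permutations_of_set T. f1 a) * (\<Sum>g\<in>permutations_of_set (R - T). f2 g)))"
  proof (intro sum.cong refl)
    fix T assume T: "T \<in> Pow R"
    then have fin: "finite T"
      using finR by (auto intro: finite_subset)
    then have card_diff: "card (R - T) = card R - card T"
      using T by (simp add: card_Diff_subset)
    have "f (a @ Min S # g) = c (card T) (card R - card T) * (f1 a * f2 g)"
      if "a \<in> permutations_of_set T" "g \<in> permutations_of_set (R - T)" for a g
      using split[of T a g] that T fin finR card_diff
      by (simp add: R_def length_finite_permutations_of_set)
    then have "(\<Sum>a\<in>permutations_of_set T. \<Sum>g\<in>permutations_of_set (R - T). f (a @ Min S # g)) =
      (\<Sum>a\<in>permutations_of_set T. \<Sum>g\<in>permutations_of_set (R - T).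
         c (card T) (card R - card T) * (f1 a * f2 g))"
      by (intro sum.cong refl)
    then show "(\<Sum>a\<in>permutations_of_set T. \<Sum>g\<in>permutations_of_set (R - T). f (a @ Min S # g)) =
      c (card T) (card R - card T) *
        ((\<Sum>a\<in>permutations_of_set T. f1 a) * (\<Sum>g\<in>permutations_of_set (R - T). f2 g))"
      unfolding sum_product by (simp only: sum_distrib_left)
  qed
  also have "\<dots> = (\<Sum>T\<in>Pow R. c (card T) (card R - card T) * (A (card T) * B (card R - card T)))"
    using sum1 sum2 finR by (intro sum.cong refl) (auto simp: R_def card_Diff_subset finite_subset)
  also have "\<dots> = (\<Sum>j\<le>card R. of_nat (card R choose j) * (c j (card R - j) * (A j * B (card R - j))))"
    by (rule sum_Pow_card[OF finR])
  finally show ?thesis by (simp add: cardR)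
qed

lemma Min_less_of_mem_Diff:
  assumes "finite S" "x \<in> S - {Min S}"
  shows "Min S < x"
  using assms Min_le[OF assms(1)] by (auto simp: order.not_eq_order_implies_strict)

primrec rlmin_count :: "'a::linorder list \<Rightarrow> nat" where
  "rlmin_count [] = 0"
| "rlmin_count (x # xs) = (if \<forall>y\<in>set xs. x < y then Suc (rlmin_count xs) else rlmin_count xs)"

lemma rlmin_count_append_min:
  assumes "\<forall>x\<in>set a. m < x" "\<forall>x\<in>set g. m < x"
  shows "rlmin_count (a @ m # g) = Suc (rlmin_count g)"
  using assms by (induction a) auto

context
  fixes p u3 u4 \<beta> :: "'a::comm_semiring_1"
begin

(* A letter between neighbours l and r weighs p at a peak, u3 at a double ascent and u4 at a double
   descent; with the borders 0 and n + 1 these are the statistics L, lrda and dd. *)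
definition local_weight :: "'b::linorder \<Rightarrow> 'b \<Rightarrow> 'b \<Rightarrow> 'a" where
  "local_weight l x r = (if l < x \<and> r < x then p else 1) * (if l < x \<and> x < r then u3 else 1)
     * (if x < l \<and> r < x then u4 else 1)"

primrec word_weight :: "'b::linorder \<Rightarrow> 'b \<Rightarrow> 'b list \<Rightarrow> 'a" where
  "word_weight l r [] = 1"
| "word_weight l r (x # xs) = local_weight l x (hd (xs @ [r])) * word_weight x r xs"

lemma word_weight_append:
  "word_weight l r (xs @ m # ys) =
     word_weight l m xs * local_weight (last (l # xs)) m (hd (ys @ [r])) * word_weight m r ys"
  by (induction xs arbitrary: l) (simp_all add: mult_ac)

lemma word_weight_conv_prod:
  "word_weight l r xs = (\<Prod>i<length xs.
     local_weight ((l # xs @ [r]) ! i) ((l # xs @ [r]) ! Suc i) ((l # xs @ [r]) ! Suc (Suc i)))"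
proof (induction xs arbitrary: l)
  case (Cons x xs)
  then show ?case
    unfolding length_Cons prod.lessThan_Suc_shift by (cases xs) (auto simp: nth_append)
qed simp

definition min_weight :: "nat \<Rightarrow> nat \<Rightarrow> 'a" where
  "min_weight i j = (if i = 0 \<and> j = 0 then p else if i = 0 then u3 else if j = 0 then u4 else 1)"

lemma local_weight_min_framed:
  assumes "l < m" "r < m" "\<forall>x\<in>set a. m < x" "\<forall>x\<in>set g. m < x"
  shows "local_weight (last (l # a)) m (hd (g @ [r])) = min_weight (length a) (length g)"
  using assms by (cases a rule: rev_cases; cases g) (auto simp: local_weight_def min_weight_def)

lemma local_weight_min_rising:
  assumes "l < m" "m < r" "\<forall>x\<in>set a. m < x" "\<forall>x\<in>set g. m < x"
  shows "local_weight (last (l # a)) m (hd (g @ [r])) = (if a = [] then u3 else 1)"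
  using assms by (cases a rule: rev_cases; cases g) (auto simp: local_weight_def)

(* framed_sum n is the total word_weight of the arrangements of an n-set between two borders
   below it; rlmin_sum n that of the arrangements between a lower left and an upper right border,
   with an extra factor \<beta> per right-to-left minimum.  Both recursions decompose at the minimum. *)

fun framed_sum :: "nat \<Rightarrow> 'a" where
  "framed_sum 0 = 1"
| "framed_sum (Suc k) =
     (\<Sum>j\<le>k. of_nat (k choose j) * (min_weight j (k - j) * (framed_sum j * framed_sum (k - j))))"

fun rlmin_sum :: "nat \<Rightarrow> 'a" where
  "rlmin_sum 0 = 1"
| "rlmin_sum (Suc k) =
     (\<Sum>j\<le>k. of_nat (k choose j) * (\<beta> * (if j = 0 then u3 else 1) * (framed_sum j * rlmin_sum (k - j))))"

lemma sum_word_weight_framed: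
  assumes "finite S" "\<forall>x\<in>S. l < x \<and> r < x"
  shows "(\<Sum>\<sigma>\<in>permutations_of_set S. word_weight l r \<sigma>) = framed_sum (card S)"
  using assms
proof (induction "card S" arbitrary: S l r rule: less_induct)
  case less
  show ?case
  proof (cases "S = {}")
    case False
    let ?m = "Min S" and ?k = "card S - 1"
    have m: "?m \<in> S" and card: "card S = Suc ?k"
      using less.prems False by (auto simp: card_gt_0_iff)
    have "(\<Sum>\<sigma>\<in>permutations_of_set S. word_weight l r \<sigma>) = (\<Sum>j\<le>?k. of_nat (?k choose j) *
        (min_weight j (?k - j) * (framed_sum j * framed_sum (?k - j))))"
    proof (rule sum_permutations_of_set_Min_convolution[OF less.prems(1) False])
      fix T a g assume "T \<subseteq> S - {?m}" "a \<in> permutations_of_set T"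
        "g \<in> permutations_of_set (S - {?m} - T)"
      then have "\<forall>x\<in>set a. ?m < x" "\<forall>x\<in>set g. ?m < x"
        using less.prems(1) by (auto intro: Min_less_of_mem_Diff simp: permutations_of_set_def)
      moreover have "l < ?m" "r < ?m"
        using less.prems(2) m by auto
      ultimately have "local_weight (last (l # a)) ?m (hd (g @ [r])) = min_weight (length a) (length g)"
        by (intro local_weight_min_framed)
      then show "word_weight l r (a @ ?m # g) =
          min_weight (length a) (length g) * (word_weight l ?m a * word_weight ?m r g)"
        unfolding word_weight_append by (simp only: mult_ac)
    next
      fix T assume T: "T \<subseteq> S - {?m}"
      then have less_card: "card T < card S" and fin: "finite T"
        using less.prems(1) m by (auto intro: psubset_card_mono finite_subset)
      have "\<forall>x\<in>T. l < x \<and> ?m < x" "\<forall>x\<in>T. ?m < x \<and> r < x"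
        using T less.prems by (auto intro: Min_less_of_mem_Diff)
      then show "(\<Sum>a\<in>permutations_of_set T. word_weight l ?m a) = framed_sum (card T)"
        "(\<Sum>g\<in>permutations_of_set T. word_weight ?m r g) = framed_sum (card T)"
        by (blast intro: less.hyps[OF less_card fin])+
    qed
    then show ?thesis by (subst card) simp
  qed simp
qed

lemma sum_word_weight_rising:
  assumes "finite S" "\<forall>x\<in>S. l < x \<and> x < r"
  shows "(\<Sum>\<sigma>\<in>permutations_of_set S. word_weight l r \<sigma> * \<beta> ^ rlmin_count \<sigma>) = rlmin_sum (card S)"
  using assms
proof (induction "card S" arbitrary: S l r rule: less_induct)
  case less
  show ?case
  proof (cases "S = {}")
    case False
    let ?m = "Min S" and ?k = "card S - 1"
    have m: "?m \<in> S" and card: "card S = Suc ?k"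
      using less.prems False by (auto simp: card_gt_0_iff)
    have "(\<Sum>\<sigma>\<in>permutations_of_set S. word_weight l r \<sigma> * \<beta> ^ rlmin_count \<sigma>) =
        (\<Sum>j\<le>?k. of_nat (?k choose j) * (\<beta> * (if j = 0 then u3 else 1) * (framed_sum j * rlmin_sum (?k - j))))"
    proof (rule sum_permutations_of_set_Min_convolution[OF less.prems(1) False])
      fix T a g assume "T \<subseteq> S - {?m}" "a \<in> permutations_of_set T"
        "g \<in> permutations_of_set (S - {?m} - T)"
      then have above: "\<forall>x\<in>set a. ?m < x" "\<forall>x\<in>set g. ?m < x"
        using less.prems(1) by (auto intro: Min_less_of_mem_Diff simp: permutations_of_set_def)
      moreover have "l < ?m" "?m < r"
        using less.prems(2) m by auto
      ultimately have "local_weight (last (l # a)) ?m (hd (g @ [r])) = (if a = [] then u3 else 1)"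
        by (intro local_weight_min_rising)
      then show "word_weight l r (a @ ?m # g) * \<beta> ^ rlmin_count (a @ ?m # g) =
          \<beta> * (if length a = 0 then u3 else 1) *
          (word_weight l ?m a * (word_weight ?m r g * \<beta> ^ rlmin_count g))"
        unfolding word_weight_append rlmin_count_append_min[OF above] by (simp add: mult_ac)
    next
      fix T assume T: "T \<subseteq> S - {?m}"
      then have less_card: "card T < card S" and fin: "finite T"
        using less.prems(1) m by (auto intro: psubset_card_mono finite_subset)
      have "\<forall>x\<in>T. l < x \<and> ?m < x" "\<forall>x\<in>T. ?m < x \<and> x < r"
        using T less.prems by (auto intro: Min_less_of_mem_Diff)
      then show "(\<Sum>a\<in>permutations_of_set T. word_weight l ?m a) = framed_sum (card T)"
        "(\<Sum>g\<in>permutations_of_set T. word_weight ?m r g * \<beta> ^ rlmin_count g) = rlmin_sum (card T)"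
        by (blast intro: sum_word_weight_framed[OF fin] less.hyps[OF less_card fin])+
    qed
    then show ?thesis by (subst card) simp
  qed simp
qed

end

lemma rlmin_count_eq_card:
  "rlmin_count xs = card {i. i < length xs \<and> (\<forall>j. i < j \<and> j < length xs \<longrightarrow> xs ! i < xs ! j)}"
proof (induction xs)
  case (Cons x xs)
  have "{i. i < length (x # xs) \<and> (\<forall>j. i < j \<and> j < length (x # xs) \<longrightarrow> (x # xs) ! i < (x # xs) ! j)} =
      (if \<forall>y\<in>set xs. x < y then {0} else {}) \<union>
      Suc ` {i. i < length xs \<and> (\<forall>j. i < j \<and> j < length xs \<longrightarrow> xs ! i < xs ! j)}"
    (is "?L = ?R")
  proof (intro set_eqI iffI)
    fix i assume i: "i \<in> ?L"
    show "i \<in> ?R"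
    proof (cases i)
      case 0
      have "x < xs ! k" if "k < length xs" for k
        using i that 0 by (auto dest: spec[of _ "Suc k"])
      then show ?thesis
        using 0 by (auto simp: in_set_conv_nth)
    next
      case (Suc k)
      have "xs ! k < xs ! j" if "k < j" "j < length xs" for j
        using i that Suc by (auto dest: spec[of _ "Suc j"])
      then show ?thesis
        using i Suc by auto
    qed
  next
    fix i assume "i \<in> ?R"
    then show "i \<in> ?L"
      by (auto simp: less_Suc_eq_0_disj split: if_splits)
  qed
  then show ?case
    using Cons by (simp add: card_image)
qed simp

lemma RLmin_eq_rlmin_count: "RLmin \<sigma> = rlmin_count \<sigma>"
proof -
  have "{i. 1 \<le> i \<and> i \<le> length \<sigma> \<and> (\<forall>j. i < j \<and> j \<le> length \<sigma> \<longrightarrow> pval \<sigma> i < pval \<sigma> j)} =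
      Suc ` {i. i < length \<sigma> \<and> (\<forall>j. i < j \<and> j < length \<sigma> \<longrightarrow> \<sigma> ! i < \<sigma> ! j)}"
    (is "?L = Suc ` ?R")
  proof (intro set_eqI iffI)
    fix i assume i: "i \<in> ?L"
    then obtain k where k: "i = Suc k" "k < length \<sigma>"
      by (cases i) auto
    have "\<sigma> ! k < \<sigma> ! j" if "k < j" "j < length \<sigma>" for j
      using i k that by (auto simp: pval_def dest: spec[of _ "Suc j"])
    then show "i \<in> Suc ` ?R"
      using k by auto
  next
    fix i assume "i \<in> Suc ` ?R"
    then obtain k where k: "i = Suc k" "k \<in> ?R"
      by auto
    have "pval \<sigma> i < pval \<sigma> j" if "i < j" "j \<le> length \<sigma>" for j
      using k that by (cases j) (auto simp: pval_def)
    then show "i \<in> ?L"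
      using k by auto
  qed
  then show ?thesis
    by (simp add: RLmin_def rlmin_count_eq_card card_image)
qed

definition bordered :: "nat list \<Rightarrow> nat list" where
  "bordered \<sigma> = 0 # \<sigma> @ [Suc (length \<sigma>)]"

lemma pval_eq_bordered_nth: "i \<le> length \<sigma> \<Longrightarrow> pval \<sigma> i = bordered \<sigma> ! i"
  by (cases i) (auto simp: pval_def bordered_def nth_append)

lemma bordered_nth_le:
  assumes "\<sigma> \<in> permutations_of_set {1..n}" "i \<le> n"
  shows "bordered \<sigma> ! i \<le> n"
proof (cases i)
  case (Suc k)
  then have k: "k < length \<sigma>"
    using assms by (simp add: length_finite_permutations_of_set)
  then have "\<sigma> ! k \<in> set \<sigma>"
    by simp
  then show ?thesis
    using assms(1) Suc k by (auto simp: bordered_def nth_append permutations_of_set_def)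
qed (simp add: bordered_def)

lemma bordered_nth_Suc_length: "\<sigma> \<in> permutations_of_set {1..n} \<Longrightarrow> bordered \<sigma> ! Suc n = Suc n"
  by (simp add: bordered_def nth_append length_finite_permutations_of_set)

lemma bordered_descent_imp_less:
  assumes "\<sigma> \<in> permutations_of_set {1..n}" "i \<le> n" "bordered \<sigma> ! (i + 1) < bordered \<sigma> ! i"
  shows "i < n"
  using assms bordered_nth_le[OF assms(1,2)] bordered_nth_Suc_length[OF assms(1)]
  by (cases "i = n") auto

lemma statL_eq_card_bordered:
  assumes "\<sigma> \<in> permutations_of_set {1..n}"
  shows "statL \<sigma> = card {i\<in>{1..n}. bordered \<sigma> ! (i - 1) < bordered \<sigma> ! i \<and> bordered \<sigma> ! (i + 1) < bordered \<sigma> ! i}"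
proof -
  have len: "length \<sigma> = n"
    using assms by (simp add: length_finite_permutations_of_set)
  show ?thesis
    unfolding statL_def
  proof (intro arg_cong[where f = card] set_eqI iffI)
    fix i assume "i \<in> {i\<in>{1..n}. bordered \<sigma> ! (i - 1) < bordered \<sigma> ! i \<and> bordered \<sigma> ! (i + 1) < bordered \<sigma> ! i}"
    then show "i \<in> {i. 1 \<le> i \<and> i < length \<sigma> \<and> pval \<sigma> (i - 1) < pval \<sigma> i \<and> pval \<sigma> (i + 1) < pval \<sigma> i}"
      using bordered_descent_imp_less[OF assms, of i] len pval_eq_bordered_nth[of _ \<sigma>] by auto
  qed (use len pval_eq_bordered_nth[of _ \<sigma>] in auto)
qed

lemma lrda_eq_card_bordered:
  assumes "\<sigma> \<in> permutations_of_set {1..n}"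
  shows "lrda \<sigma> = card {i\<in>{1..n}. bordered \<sigma> ! (i - 1) < bordered \<sigma> ! i \<and> bordered \<sigma> ! i < bordered \<sigma> ! (i + 1)}"
proof -
  have len: "length \<sigma> = n"
    using assms by (simp add: length_finite_permutations_of_set)
  have last: "bordered \<sigma> ! n < bordered \<sigma> ! (n + 1)"
    using bordered_nth_le[OF assms, of n] bordered_nth_Suc_length[OF assms] by simp
  show ?thesis
    unfolding lrda_def
  proof (intro arg_cong[where f = card] set_eqI iffI)
    fix i assume "i \<in> {i. 1 \<le> i \<and> i \<le> length \<sigma> \<and> pval \<sigma> (i - 1) < pval \<sigma> i \<and>
        (i = length \<sigma> \<or> pval \<sigma> i < pval \<sigma> (i + 1))}"
    then show "i \<in> {i\<in>{1..n}. bordered \<sigma> ! (i - 1) < bordered \<sigma> ! i \<and> bordered \<sigma> ! i < bordered \<sigma> ! (i + 1)}"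
      using len last pval_eq_bordered_nth[of "i - 1" \<sigma>] pval_eq_bordered_nth[of i \<sigma>]
        pval_eq_bordered_nth[of "i + 1" \<sigma>]
      by (cases "i = n") auto
  next
    fix i assume "i \<in> {i\<in>{1..n}. bordered \<sigma> ! (i - 1) < bordered \<sigma> ! i \<and> bordered \<sigma> ! i < bordered \<sigma> ! (i + 1)}"
    then show "i \<in> {i. 1 \<le> i \<and> i \<le> length \<sigma> \<and> pval \<sigma> (i - 1) < pval \<sigma> i \<and>
        (i = length \<sigma> \<or> pval \<sigma> i < pval \<sigma> (i + 1))}"
      using len pval_eq_bordered_nth[of "i - 1" \<sigma>] pval_eq_bordered_nth[of i \<sigma>]
        pval_eq_bordered_nth[of "i + 1" \<sigma>]
      by (cases "i = n") auto
  qed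
qed

lemma dd_eq_card_bordered:
  assumes "\<sigma> \<in> permutations_of_set {1..n}"
  shows "dd \<sigma> = card {i\<in>{1..n}. bordered \<sigma> ! i < bordered \<sigma> ! (i - 1) \<and> bordered \<sigma> ! (i + 1) < bordered \<sigma> ! i}"
proof -
  have len: "length \<sigma> = n"
    using assms by (simp add: length_finite_permutations_of_set)
  show ?thesis
    unfolding dd_def
  proof (intro arg_cong[where f = card] set_eqI iffI)
    fix i assume "i \<in> {i\<in>{1..n}. bordered \<sigma> ! i < bordered \<sigma> ! (i - 1) \<and> bordered \<sigma> ! (i + 1) < bordered \<sigma> ! i}"
    moreover have "i \<noteq> 1"
      using calculation by (auto simp: bordered_def)
    ultimately show "i \<in> {i. 1 < i \<and> i < length \<sigma> \<and> pval \<sigma> i < pval \<sigma> (i - 1) \<and> pval \<sigma> (i + 1) < pval \<sigma> i}"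
      using bordered_descent_imp_less[OF assms, of i] len pval_eq_bordered_nth[of _ \<sigma>] by auto
  qed (use len pval_eq_bordered_nth[of _ \<sigma>] in auto)
qed

lemma monomial_eq_word_weight:
  fixes p u3 u4 :: "'a::comm_semiring_1"
  assumes "\<sigma> \<in> permutations_of_set {1..n}"
  shows "p ^ statL \<sigma> * u3 ^ lrda \<sigma> * u4 ^ dd \<sigma> = word_weight p u3 u4 0 (Suc n) \<sigma>"
proof -
  let ?e = "bordered \<sigma>"
  have "p ^ statL \<sigma> * u3 ^ lrda \<sigma> * u4 ^ dd \<sigma> =
      (\<Prod>i\<in>{1..n}. if ?e ! (i - 1) < ?e ! i \<and> ?e ! (i + 1) < ?e ! i then p else 1) *
      (\<Prod>i\<in>{1..n}. if ?e ! (i - 1) < ?e ! i \<and> ?e ! i < ?e ! (i + 1) then u3 else 1) *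
      (\<Prod>i\<in>{1..n}. if ?e ! i < ?e ! (i - 1) \<and> ?e ! (i + 1) < ?e ! i then u4 else 1)"
    unfolding statL_eq_card_bordered[OF assms] lrda_eq_card_bordered[OF assms] dd_eq_card_bordered[OF assms]
    by (simp only: power_card_filter_eq_prod[OF finite_atLeastAtMost])
  also have "\<dots> = (\<Prod>k<n. local_weight p u3 u4 (?e ! k) (?e ! Suc k) (?e ! Suc (Suc k)))"
    unfolding One_nat_def prod.atLeast1_atMost_eq by (simp add: local_weight_def prod.distrib)
  also have "\<dots> = word_weight p u3 u4 0 (Suc n) \<sigma>"
    using assms by (simp add: word_weight_conv_prod bordered_def length_finite_permutations_of_set)
  finally show ?thesis .
qed

unbundle fps_syntax

lemma fps_deriv_eq_mult_unique:
  fixes X Y K :: "'a::field_char_0 fps"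
  assumes "fps_deriv X = K * X" "fps_deriv Y = K * Y" "X $ 0 = Y $ 0"
  shows "X = Y"
proof -
  have "(X - Y) $ n = 0" for n
  proof (induction n rule: less_induct)
    case (less n)
    show ?case
    proof (cases n)
      case (Suc m)
      have "fps_deriv (X - Y) = K * (X - Y)"
        using assms(1,2) by (simp add: algebra_simps)
      then have "of_nat (m + 1) * (X - Y) $ (m + 1) = (K * (X - Y)) $ m"
        by (metis fps_deriv_nth)
      also have "\<dots> = 0"
        unfolding fps_mult_nth using less Suc by (intro sum.neutral) auto
      finally have "of_nat (m + 1) * (X - Y) $ (m + 1) = 0" .
      moreover have "(of_nat (m + 1) :: 'a) \<noteq> 0"
        by (simp only: of_nat_eq_0_iff)
      ultimately show ?thesis
        using Suc by simp
    qed (use assms(3) in simp)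
  qed
  then show ?thesis
    by (simp add: fps_eq_iff)
qed

lemma fps_deriv_nth_div_fact:
  fixes X :: "'a::field_char_0 fps"
  assumes "X $ Suc n = c / fact (Suc n)"
  shows "fps_deriv X $ n = c / fact n"
  using assms by (simp add: fps_deriv_nth field_simps del: of_nat_Suc)

lemma fps_deriv_deriv_nth:
  fixes X :: "'a::field_char_0 fps"
  assumes "X $ Suc (Suc n) = c / fact (Suc (Suc n))"
  shows "fps_deriv (fps_deriv X) $ n = c / fact n"
  by (intro fps_deriv_nth_div_fact assms)

lemma fps_deriv_deriv_cosh_ser:
  fixes a :: "'a::field_char_0"
  shows "fps_deriv (fps_deriv (fps_cosh_ser a)) = fps_const (a^2) * fps_cosh_ser a"
proof (rule fps_ext)
  fix n
  have "fps_cosh_ser a $ Suc (Suc n) = (if even n then a^2 * a^n else 0) / fact (Suc (Suc n))"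
    by (simp add: fps_cosh_ser_def power2_eq_square mult.assoc del: fact_Suc)
  then have "fps_deriv (fps_deriv (fps_cosh_ser a)) $ n = (if even n then a^2 * a^n else 0) / fact n"
    by (rule fps_deriv_deriv_nth)
  then show "fps_deriv (fps_deriv (fps_cosh_ser a)) $ n = (fps_const (a^2) * fps_cosh_ser a) $ n"
    by (simp add: fps_cosh_ser_def)
qed

lemma fps_deriv_deriv_sinh_half_div:
  fixes s :: "'a::field_char_0"
  shows "fps_deriv (fps_deriv (fps_sinh_half_div s)) = fps_const (s^2 / 4) * fps_sinh_half_div s"
proof (rule fps_ext)
  fix n
  have "fps_sinh_half_div s $ Suc (Suc n) =
      (if odd n then s^2 / 4 * (s ^ (n - 1) / 2 ^ n) else 0) / fact (Suc (Suc n))"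
    by (cases n) (simp_all add: fps_sinh_half_div_def power2_eq_square field_simps del: fact_Suc)
  then have "fps_deriv (fps_deriv (fps_sinh_half_div s)) $ n =
      (if odd n then s^2 / 4 * (s ^ (n - 1) / 2 ^ n) else 0) / fact n"
    by (rule fps_deriv_deriv_nth)
  then show "fps_deriv (fps_deriv (fps_sinh_half_div s)) $ n = (fps_const (s^2 / 4) * fps_sinh_half_div s) $ n"
    by (simp add: fps_sinh_half_div_def)
qed

lemma riccati_linearization:
  fixes G D :: "'a::field_char_0 fps"
  assumes G_ode: "fps_deriv (fps_deriv G) = fps_const S * G"
    and D_ode: "fps_deriv D = fps_const (k * k - S) + fps_const (2 * k) * D + D * D"
    and init: "fps_deriv G $ 0 = - ((D $ 0 + k) * G $ 0)"
  shows "fps_deriv G = - ((D + fps_const k) * G)"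
proof -
  define Z where "Z = G * (D + fps_const k) + fps_deriv G"
  have const_split: "fps_const (k * k - S) = fps_const k * fps_const k - fps_const S"
    "fps_const (2 * k) = 2 * fps_const k"
    by (simp_all add: fps_numeral_fps_const)
  have "fps_deriv Z = (D + fps_const k) * Z"
    unfolding Z_def fps_deriv_add fps_deriv_mult fps_deriv_const G_ode D_ode const_split by algebra
  moreover have "Z $ 0 = 0"
    unfolding Z_def fps_add_nth init by (simp add: mult.commute)
  ultimately have "Z = 0"
    using fps_deriv_eq_mult_unique[of Z "D + fps_const k" 0] by simp
  then show ?thesis
    unfolding Z_def by (metis add.commute mult.commute eq_neg_iff_add_eq_0)
qed

lemma fps_deriv_fps_log:
  fixes G K :: "'a::field_char_0 fps"
  assumes "G $ 0 = 1" "fps_deriv G = K * G"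
  shows "fps_deriv (fps_log G) = K"
proof -
  have G1: "(G - 1) $ 0 = 0"
    using assms(1) by simp
  have "(1 + fps_X) oo (G - 1) = G"
    using G1 by (simp add: fps_compose_add_distrib)
  then have "inverse (1 + fps_X) oo (G - 1) = inverse G"
    using G1 by (simp add: fps_inverse_compose)
  then have "fps_deriv (fps_log G) = inverse G * fps_deriv G"
    unfolding fps_log_def using G1 by (simp add: fps_compose_deriv fps_ln_deriv)
  also have "\<dots> = K * (inverse G * G)"
    using assms(2) by (simp add: algebra_simps)
  finally show ?thesis
    using assms(1) by (simp add: inverse_mult_eq_1)
qed

lemma fps_gpow_nth_0 [simp]: "fps_gpow G c $ 0 = 1"
  by (simp add: fps_gpow_def)

lemma fps_deriv_fps_gpow:
  fixes G :: "'a::field_char_0 fps"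
  shows "fps_deriv (fps_gpow G c) = fps_const c * fps_deriv (fps_log G) * fps_gpow G c"
proof -
  have L0: "fps_log G $ 0 = 0"
    by (simp add: fps_log_def fps_ln_def)
  then have "fps_deriv (fps_gpow G c) = (fps_const c * fps_exp c oo fps_log G) * fps_deriv (fps_log G)"
    unfolding fps_gpow_def by (simp add: fps_compose_deriv)
  also have "\<dots> = fps_const c * fps_deriv (fps_log G) * fps_gpow G c"
    unfolding fps_gpow_def using L0 by (simp add: fps_compose_mult_distrib mult_ac)
  finally show ?thesis .
qed

lemma binomial_convolution_div_fact:
  fixes x y c :: "nat \<Rightarrow> 'a::field_char_0"
  shows "(\<Sum>j\<le>k. of_nat (k choose j) * (c j * (x j * y (k - j)))) / fact k =
    (\<Sum>j\<le>k. c j * (x j / fact j * (y (k - j) / fact (k - j))))"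
  unfolding sum_divide_distrib by (intro sum.cong refl) (auto simp: binomial_fact field_simps)

definition framed_egf :: "'a::field_char_0 \<Rightarrow> 'a \<Rightarrow> 'a \<Rightarrow> 'a fps" where
  "framed_egf p u3 u4 = Abs_fps (\<lambda>k. if k = 0 then 0 else framed_sum p u3 u4 k / fact k)"

definition rlmin_egf :: "'a::field_char_0 \<Rightarrow> 'a \<Rightarrow> 'a \<Rightarrow> 'a \<Rightarrow> 'a fps" where
  "rlmin_egf p u3 u4 \<beta> = Abs_fps (\<lambda>k. rlmin_sum p u3 u4 \<beta> k / fact k)"

lemma fps_deriv_framed_egf:
  fixes p u3 u4 :: "'a::field_char_0"
  defines "D \<equiv> framed_egf p u3 u4"
  shows "fps_deriv D = fps_const p + fps_const (u3 + u4) * D + D * D"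
proof (rule fps_ext)
  fix k
  let ?A = "framed_sum p u3 u4"
  have D_nth: "D $ j = (if j = 0 then 0 else ?A j / fact j)" for j
    by (simp add: D_def framed_egf_def)
  have summand: "min_weight p u3 u4 j (k - j) * (?A j / fact j * (?A (k - j) / fact (k - j))) =
      D $ j * D $ (k - j) + u3 * (1 $ j * D $ (k - j)) + u4 * (D $ j * 1 $ (k - j)) + p * (1 $ j * 1 $ (k - j))"
    for j
    by (cases "j = 0"; cases "k - j = 0") (auto simp: D_nth min_weight_def)
  have "fps_deriv D $ k = ?A (Suc k) / fact k"
    by (rule fps_deriv_nth_div_fact) (simp add: D_nth)
  also have "\<dots> = (\<Sum>j\<le>k. min_weight p u3 u4 j (k - j) * (?A j / fact j * (?A (k - j) / fact (k - j))))"
    unfolding framed_sum.simps by (rule binomial_convolution_div_fact)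
  also have "\<dots> = (\<Sum>j\<le>k. D $ j * D $ (k - j) + u3 * (1 $ j * D $ (k - j)) + u4 * (D $ j * 1 $ (k - j))
      + p * (1 $ j * 1 $ (k - j)))"
    by (simp only: summand)
  also have "\<dots> = (D * D) $ k + u3 * ((1 * D) $ k) + u4 * ((D * 1) $ k) + p * ((1 * 1) $ k)"
    by (simp only: sum.distrib sum_distrib_left[symmetric] fps_mult_nth atMost_atLeast0)
  also have "\<dots> = (fps_const p + fps_const (u3 + u4) * D + D * D) $ k"
    by (simp add: algebra_simps)
  finally show "fps_deriv D $ k = (fps_const p + fps_const (u3 + u4) * D + D * D) $ k" .
qed

lemma fps_deriv_rlmin_egf:
  fixes p u3 u4 \<beta> :: "'a::field_char_0"
  defines "F \<equiv> rlmin_egf p u3 u4 \<beta>"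
  shows "fps_deriv F = fps_const \<beta> * (framed_egf p u3 u4 + fps_const u3) * F"
proof (rule fps_ext)
  fix k
  let ?A = "framed_sum p u3 u4" and ?R = "rlmin_sum p u3 u4 \<beta>" and ?D = "framed_egf p u3 u4"
  have F_nth: "F $ j = ?R j / fact j" for j
    by (simp add: F_def rlmin_egf_def)
  have summand: "\<beta> * (if j = 0 then u3 else 1) * (?A j / fact j * (?R (k - j) / fact (k - j))) =
      \<beta> * ((?D + fps_const u3) $ j * F $ (k - j))" for j
    by (cases "j = 0") (auto simp: F_nth framed_egf_def)
  have "fps_deriv F $ k = ?R (Suc k) / fact k"
    by (rule fps_deriv_nth_div_fact) (simp add: F_nth)
  also have "\<dots> = (\<Sum>j\<le>k. \<beta> * (if j = 0 then u3 else 1) * (?A j / fact j * (?R (k - j) / fact (k - j))))"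
    unfolding rlmin_sum.simps by (rule binomial_convolution_div_fact)
  also have "\<dots> = \<beta> * ((?D + fps_const u3) * F) $ k"
    by (simp only: summand sum_distrib_left[symmetric] fps_mult_nth atMost_atLeast0)
  finally show "fps_deriv F $ k = (fps_const \<beta> * (?D + fps_const u3) * F) $ k"
    by (simp add: mult.assoc)
qed

lemma fps_deriv_fps_log_cosh_sinh:
  fixes p u3 u4 s :: "'a::field_char_0"
  assumes "s^2 = (u3 + u4)^2 - 4 * p"
  shows "fps_deriv (fps_log (fps_cosh_ser (s / 2) - fps_const (u3 + u4) * fps_sinh_half_div s)) =
    - (framed_egf p u3 u4 + fps_const ((u3 + u4) / 2))"
proof (rule fps_deriv_fps_log)
  let ?G = "fps_cosh_ser (s / 2) - fps_const (u3 + u4) * fps_sinh_half_div s"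
    and ?D = "framed_egf p u3 u4" and ?k = "(u3 + u4) / 2"
  show G0: "?G $ 0 = 1"
    by (simp add: fps_cosh_ser_def fps_sinh_half_div_def)
  have G_ode: "fps_deriv (fps_deriv ?G) = fps_const (s^2 / 4) * ?G"
    by (simp add: fps_deriv_deriv_cosh_ser fps_deriv_deriv_sinh_half_div power_divide algebra_simps)
  have "?k * ?k - s^2 / 4 = ((u3 + u4)^2 - s^2) / 4"
    by (simp add: power_divide diff_divide_distrib flip: power2_eq_square)
  then have "?k * ?k - s^2 / 4 = p" "2 * ?k = u3 + u4"
    using assms by simp_all
  then have D_ode: "fps_deriv ?D = fps_const (?k * ?k - s^2 / 4) + fps_const (2 * ?k) * ?D + ?D * ?D"
    by (simp only: fps_deriv_framed_egf)
  have init: "fps_deriv ?G $ 0 = - ((?D $ 0 + ?k) * ?G $ 0)"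
    by (simp add: fps_cosh_ser_def fps_sinh_half_div_def framed_egf_def)
  show "fps_deriv ?G = - (?D + fps_const ?k) * ?G"
    using riccati_linearization[OF G_ode D_ode init] by (simp only: minus_mult_left)
qed

lemma rlmin_egf_closed_form:
  fixes p u3 u4 \<beta> s :: "'a::field_char_0"
  assumes "s^2 = (u3 + u4)^2 - 4 * p"
  shows "rlmin_egf p u3 u4 \<beta> = fps_exp (\<beta> / 2 * (u3 - u4)) *
    fps_gpow (fps_cosh_ser (s / 2) - fps_const (u3 + u4) * fps_sinh_half_div s) (- \<beta>)"
    (is "_ = ?H")
proof (rule fps_deriv_eq_mult_unique)
  let ?G = "fps_cosh_ser (s / 2) - fps_const (u3 + u4) * fps_sinh_half_div s"
    and ?D = "framed_egf p u3 u4"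
  show "fps_deriv (rlmin_egf p u3 u4 \<beta>) = fps_const \<beta> * (?D + fps_const u3) * rlmin_egf p u3 u4 \<beta>"
    by (rule fps_deriv_rlmin_egf)
  let ?a = "\<beta> / 2 * (u3 - u4)" and ?k = "(u3 + u4) / 2"
  have "fps_deriv (fps_gpow ?G (- \<beta>)) = fps_const \<beta> * (?D + fps_const ?k) * fps_gpow ?G (- \<beta>)"
    unfolding fps_deriv_fps_gpow fps_deriv_fps_log_cosh_sinh[OF assms] fps_const_neg[symmetric] by algebra
  then have "fps_deriv ?H = (fps_const ?a + fps_const \<beta> * (?D + fps_const ?k)) * ?H"
    unfolding fps_deriv_mult fps_exp_deriv by algebra
  moreover have "fps_const ?a + fps_const \<beta> * (?D + fps_const ?k) = fps_const \<beta> * (?D + fps_const u3)"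
  proof -
    have "fps_const ?a + fps_const \<beta> * fps_const ?k = fps_const \<beta> * fps_const u3"
      by (simp add: field_simps)
    moreover have "fps_const ?a + fps_const \<beta> * (?D + fps_const ?k) =
        fps_const \<beta> * ?D + (fps_const ?a + fps_const \<beta> * fps_const ?k)"
      by algebra
    ultimately show ?thesis
      by (simp only: distrib_left)
  qed
  ultimately show "fps_deriv ?H = fps_const \<beta> * (?D + fps_const u3) * ?H"
    by (simp only:)
  show "rlmin_egf p u3 u4 \<beta> $ 0 = ?H $ 0"
    by (simp add: rlmin_egf_def)
qed

theorem theorem4p1:
  fixes u1 u2 u3 u4 \<beta> :: complex
  defines "s \<equiv> csqrt ((u3 + u4)^2 - 4 * u1 * u2)"
  shows "Abs_fps (\<lambda>n. (\<Sum>\<sigma>\<in>permutations_of_set {1..n}.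
            (u1 * u2) ^ statL \<sigma> * u3 ^ lrda \<sigma> * u4 ^ dd \<sigma> * \<beta> ^ RLmin \<sigma>) / of_nat (fact n))
       = fps_exp (\<beta> / 2 * (u3 - u4)) *
         fps_gpow (fps_cosh_ser (s / 2) - fps_const (u3 + u4) * fps_sinh_half_div s) (- \<beta>)"
proof -
  have s: "s^2 = (u3 + u4)^2 - 4 * (u1 * u2)"
    unfolding s_def by (simp add: power2_csqrt mult.assoc)
  have "Abs_fps (\<lambda>n. (\<Sum>\<sigma>\<in>permutations_of_set {1..n}.
            (u1 * u2) ^ statL \<sigma> * u3 ^ lrda \<sigma> * u4 ^ dd \<sigma> * \<beta> ^ RLmin \<sigma>) / of_nat (fact n))
      = rlmin_egf (u1 * u2) u3 u4 \<beta>"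
  proof (rule fps_ext)
    fix n
    have "(\<Sum>\<sigma>\<in>permutations_of_set {1..n}. (u1 * u2) ^ statL \<sigma> * u3 ^ lrda \<sigma> * u4 ^ dd \<sigma> * \<beta> ^ RLmin \<sigma>) =
        (\<Sum>\<sigma>\<in>permutations_of_set {1..n}. word_weight (u1 * u2) u3 u4 0 (Suc n) \<sigma> * \<beta> ^ rlmin_count \<sigma>)"
      by (intro sum.cong refl) (simp add: monomial_eq_word_weight RLmin_eq_rlmin_count)
    also have "\<dots> = rlmin_sum (u1 * u2) u3 u4 \<beta> n"
      by (subst sum_word_weight_rising) auto
    finally show "Abs_fps (\<lambda>n. (\<Sum>\<sigma>\<in>permutations_of_set {1..n}.
            (u1 * u2) ^ statL \<sigma> * u3 ^ lrda \<sigma> * u4 ^ dd \<sigma> * \<beta> ^ RLmin \<sigma>) / of_nat (fact n)) $ n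
      = rlmin_egf (u1 * u2) u3 u4 \<beta> $ n"
      by (simp add: rlmin_egf_def)
  qed
  then show ?thesis
    by (simp add: rlmin_egf_closed_form[OF s])
qed

end
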